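(* Let $w\in W'(d,2m;\vec 0)$. If $\Phi(\phi(w))=w$, then $\phi(w)\in\overline G_r(U,V;d)$.
   Context: $n,r,d\ge1$, $m=rn$. $U=\{u_1\prec\cdots\prec u_n\}$, $V=\{v_1\prec\cdots\prec v_n\}$. An $r$-regular bipartite multigraph on $(U,V)$ is a multiset of edges $uv$ in which every vertex has degree $r$. Edges $uv,u'v'$ are noncrossing if ($u\prec u'$ and $v\prec v'$) or ($u'\prec u$ and $v'\prec v$); a planar matching is a set of pairwise noncrossing edges; $L(G)$ is its maximum size; $G_r(U,V;d)$ is the set of $r$-regular multigraphs $G$ with $L(G)\le d$. $\overline U=U\times[r]$, $\overline V=V\times[r]$ ordered lexicographically (write $u^s$ for $(u,s)$); noncrossing pairs in $\overline U\times\overline V$ defined the same way. An $r$-configuration is a bijection between $\overline U$ and $\overline V$; a quasi configuration is a partial matching. For $G$ an $r$-regular multigraph, its associated configuration $\overline G$: for each edge $uv$ of multiplicity $t\ge1$, let $i$ be the number of edges $uv'$ (with multiplicity) with $v\prec v'$, $j$ the number of edges $u'v$ with $u\prec u'$; $\overline G$ contains $(u^{i+s},v^{j+t-s+1})$, $s=1,\dots,t$. $\overline G_r(U,V;d)=\{\overline G:G\in G_r(U,V;d)\}$. Walks $w=a_{u_1^1}\cdots a_{u_n^r}|b_{v_1^1}\cdots b_{v_n^r}$ ($a,b\in[d]$) in $\mathbb Z^d$ from the origin with steps $e_{a_{\bar u}}$ ($\bar u$ increasing) then $-e_{b_{\bar v}}$ ($\bar v$ increasing); $W'(d,2m;\vec0)$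 is the set of those ending at the origin with $a_{u^s}\ge a_{u^{s+1}}$ and $b_{v^s}\ge b_{v^{s+1}}$ for all $u\in U,v\in V$, $1\le s<r$. For an $r$-configuration $F$: $a_{\bar u}$ is the maximum size of a set of pairwise noncrossing pairs of $F$ containing the pair $(\bar u,\bar v')\in F$, all of whose pairs $(x,y)$ satisfy $x\preceq\bar u$, $y\preceq\bar v'$; $b_{\bar v}$ symmetrically; $\Phi(F)=a_{u_1^1}\cdots a_{u_n^r}|b_{v_1^1}\cdots b_{v_n^r}$. $A_k(w)=\{\bar u:a_{\bar u}=k\}$, $B_k(w)=\{\bar v:b_{\bar v}=k\}$; connecting equal-size ordered sets $A,B$ in a crossing way: pair the $i$-th smallest of $A$ with the $i$-th largest of $B$; $\phi(w)$: for each $k$, if $|A_k(w)|\ge|B_k(w)|$ connect the $|B_k(w)|$ smallest elements of $A_k(w)$ with $B_k(w)$ in a crossing way, else connect $A_k(w)$ with the $|A_k(w)|$ largest elements of $B_k(w)$ in a crossing way. *)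

theory Defs
  imports Main "HOL-Library.Product_Lexorder"
begin

text \<open>Vertices: U = V = {0..<n} with the natural order (u_1 < ... < u_n is index 0..n-1).
  Copies: \<open>(i, s)\<close> with \<open>i < n\<close>, \<open>1 \<le> s \<le> r\<close> stands for u_{i+1}^s; pairs are ordered
  lexicographically (Product_Lexorder).\<close>

definition Ubar :: "nat \<Rightarrow> nat \<Rightarrow> (nat \<times> nat) set" where
  "Ubar n r = {0..<n} \<times> {1..r}"

definition noncross :: "('a::ord \<times> 'b::ord) \<Rightarrow> ('a \<times> 'b) \<Rightarrow> bool" where
  "noncross e e' \<longleftrightarrow> (fst e < fst e' \<and> snd e < snd e') \<or> (fst e' < fst e \<and> snd e' < snd e)"

text \<open>A bipartite multigraph on (U,V) is given by its multiplicity function G i j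
  (number of edges u_i v_j), vanishing outside {0..<n} x {0..<n}.\<close>

definition is_multigraph :: "nat \<Rightarrow> (nat \<Rightarrow> nat \<Rightarrow> nat) \<Rightarrow> bool" where
  "is_multigraph n G \<longleftrightarrow> (\<forall>i j. G i j \<noteq> 0 \<longrightarrow> i < n \<and> j < n)"

definition regular :: "nat \<Rightarrow> nat \<Rightarrow> (nat \<Rightarrow> nat \<Rightarrow> nat) \<Rightarrow> bool" where
  "regular n r G \<longleftrightarrow> (\<forall>i<n. (\<Sum>j<n. G i j) = r) \<and> (\<forall>j<n. (\<Sum>i<n. G i j) = r)"

definition planar_matching :: "nat \<Rightarrow> (nat \<Rightarrow> nat \<Rightarrow> nat) \<Rightarrow> (nat \<times> nat) set \<Rightarrow> bool" where
  "planar_matching n G M \<longleftrightarrow>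
     M \<subseteq> {(i, j). i < n \<and> j < n \<and> G i j > 0} \<and> pairwise noncross M"

definition Lmax :: "nat \<Rightarrow> (nat \<Rightarrow> nat \<Rightarrow> nat) \<Rightarrow> nat" where
  "Lmax n G = Max {card M | M. planar_matching n G M}"

definition Gr :: "nat \<Rightarrow> nat \<Rightarrow> nat \<Rightarrow> (nat \<Rightarrow> nat \<Rightarrow> nat) set" where
  "Gr n r d = {G. is_multigraph n G \<and> regular n r G \<and> Lmax n G \<le> d}"

text \<open>Associated configuration: for an edge u v of multiplicity t \<ge> 1,
  i = #edges u v' with v < v', j = #edges u' v with u < u'; pairs (u^{i+s}, v^{j+t-s+1}).\<close>
definition conf_of :: "nat \<Rightarrow> (nat \<Rightarrow> nat \<Rightarrow> nat) \<Rightarrow> ((nat \<times> nat) \<times> (nat \<times> nat)) set" where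
  "conf_of n G =
     {((u, (\<Sum>v'\<in>{v<..<n}. G u v') + s), (v, (\<Sum>u'\<in>{u<..<n}. G u' v) + G u v - s + 1)) | u v s.
        u < n \<and> v < n \<and> 1 \<le> G u v \<and> 1 \<le> s \<and> s \<le> G u v}"

definition Gbar_set :: "nat \<Rightarrow> nat \<Rightarrow> nat \<Rightarrow> ((nat \<times> nat) \<times> (nat \<times> nat)) set set" where
  "Gbar_set n r d = conf_of n ` Gr n r d"

text \<open>A walk is a pair (a, b) of labellings of Ubar resp. Vbar by letters in [d].
  It ends at the origin iff for each k the number of +e_k steps equals the number of -e_k steps.\<close>
definition Wp :: "nat \<Rightarrow> nat \<Rightarrow> nat \<Rightarrow> ((nat \<times> nat \<Rightarrow> nat) \<times> (nat \<times> nat \<Rightarrow> nat)) set" where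
  "Wp n r d = {(a, b).
     (\<forall>x\<in>Ubar n r. a x \<in> {1..d}) \<and> (\<forall>y\<in>Ubar n r. b y \<in> {1..d}) \<and>
     (\<forall>k\<in>{1..d}. card {x\<in>Ubar n r. a x = k} = card {y\<in>Ubar n r. b y = k}) \<and>
     (\<forall>i<n. \<forall>s. 1 \<le> s \<and> s < r \<longrightarrow> a (i, s) \<ge> a (i, s + 1)) \<and>
     (\<forall>i<n. \<forall>s. 1 \<le> s \<and> s < r \<longrightarrow> b (i, s) \<ge> b (i, s + 1))}"

definition cross_connect :: "'a::linorder set \<Rightarrow> 'b::linorder set \<Rightarrow> ('a \<times> 'b) set" where
  "cross_connect A B = {(x, y). x \<in> A \<and> y \<in> B \<and>
     card {x'\<in>A. x' < x} = card {y'\<in>B. y < y'}}"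

definition smallest :: "nat \<Rightarrow> 'a::linorder set \<Rightarrow> 'a set" where
  "smallest c A = {x\<in>A. card {x'\<in>A. x' < x} < c}"

definition largest :: "nat \<Rightarrow> 'a::linorder set \<Rightarrow> 'a set" where
  "largest c B = {y\<in>B. card {y'\<in>B. y < y'} < c}"

definition phi :: "nat \<Rightarrow> nat \<Rightarrow> nat \<Rightarrow> (nat \<times> nat \<Rightarrow> nat) \<Rightarrow> (nat \<times> nat \<Rightarrow> nat)
                   \<Rightarrow> ((nat \<times> nat) \<times> (nat \<times> nat)) set" where
  "phi n r d a b = (\<Union>k\<in>{1..d}.
     (let A = {x\<in>Ubar n r. a x = k}; B = {y\<in>Ubar n r. b y = k} in
      if card A \<ge> card B then cross_connect (smallest (card B) A) B
      else cross_connect A (largest (card A) B)))"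

definition Phi_a :: "((nat \<times> nat) \<times> (nat \<times> nat)) set \<Rightarrow> nat \<times> nat \<Rightarrow> nat" where
  "Phi_a F x = Max {card S | S v'. (x, v') \<in> F \<and> S \<subseteq> F \<and> (x, v') \<in> S \<and> pairwise noncross S \<and>
                     (\<forall>(p, q)\<in>S. p \<le> x \<and> q \<le> v')}"

definition Phi_b :: "((nat \<times> nat) \<times> (nat \<times> nat)) set \<Rightarrow> nat \<times> nat \<Rightarrow> nat" where
  "Phi_b F y = Max {card S | S u'. (u', y) \<in> F \<and> S \<subseteq> F \<and> (u', y) \<in> S \<and> pairwise noncross S \<and>
                     (\<forall>(p, q)\<in>S. p \<le> u' \<and> q \<le> y)}"

end

theory Submission
  imports Defs
begin

(*
  Since every letter k occurs equally often in a and b, phi(w) is a configuration F that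
  matches the copies labelled k bijectively. If Phi_a F = a, the label strictly increases
  from a pair of F to any pair lying above it in both coordinates (a longest noncrossing
  chain below the first pair extends by the second), whereas labels weakly decrease
  along the copies of one vertex. Hence F matches the copies of every vertex in reverse
  order, which is exactly the shape of the configuration associated with the multigraph
  G obtained from F by forgetting copy indices; counting copies then identifies F with
  the configuration of G. This G is r-regular, and every planar matching of G lifts to a
  noncrossing chain of F, so its size is bounded by a value of Phi_a F = a, hence by d.
*)

lemma card_eq_sum_card_fibres:
  assumes "finite S" "finite T"
  shows "card {x\<in>S. f x \<in> T} = (\<Sum>t\<in>T. card {x\<in>S. f x = t})"
proof -
  have "card {x\<in>S. f x \<in> T} = card (\<Union>t\<in>T. {x\<in>S. f x = t})"
    by (rule arg_cong[where f = card]) auto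
  also have "\<dots> = (\<Sum>t\<in>T. card {x\<in>S. f x = t})"
    using assms by (intro card_UN_disjoint) auto
  finally show ?thesis .
qed

lemma bij_betw_card_predecessors:
  fixes R :: "'a \<Rightarrow> 'a \<Rightarrow> bool"
  assumes "finite A"
    and trans: "\<And>x y z. R x y \<Longrightarrow> R y z \<Longrightarrow> R x z"
    and irrefl: "\<And>x. \<not> R x x"
    and total: "\<And>x y. x \<in> A \<Longrightarrow> y \<in> A \<Longrightarrow> x \<noteq> y \<Longrightarrow> R x y \<or> R y x"
  shows "bij_betw (\<lambda>x. card {x'\<in>A. R x' x}) A {0..<card A}"
proof -
  let ?rank = "\<lambda>x. card {x'\<in>A. R x' x}"
  have less: "?rank x < ?rank y" if "x \<in> A" "R x y" for x y
  proof (rule psubset_card_mono)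
    show "{x'\<in>A. R x' x} \<subset> {x'\<in>A. R x' y}"
      using that trans irrefl by blast
  qed (use assms in simp)
  have inj: "inj_on ?rank A"
  proof (rule inj_onI)
    fix x y
    assume "x \<in> A" "y \<in> A" "?rank x = ?rank y"
    then show "x = y"
      using total[of x y] less[of x y] less[of y x] by auto
  qed
  have "?rank x < card A" if "x \<in> A" for x
  proof (rule psubset_card_mono)
    show "{x'\<in>A. R x' x} \<subset> A"
      using that irrefl by blast
  qed (use assms in simp)
  then have "?rank ` A \<subseteq> {0..<card A}"
    by auto
  then have "?rank ` A = {0..<card A}"
    by (intro card_subset_eq) (simp_all add: card_image[OF inj])
  with inj show ?thesis
    by (simp add: bij_betw_def)
qed

lemma card_split_less_eq_greater:
  fixes f :: "'a \<Rightarrow> 'b::linorder"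
  assumes "finite A"
  shows "card A = card {x\<in>A. f x < c} + card {x\<in>A. f x = c} + card {x\<in>A. c < f x}"
    (is "_ = card ?L + card ?E + card ?G")
proof -
  have "A = ?L \<union> ?E \<union> ?G"
    by (auto simp: neq_iff)
  also have "card \<dots> = card (?L \<union> ?E) + card ?G"
    by (rule card_Un_disjoint) (use assms in auto)
  also have "card (?L \<union> ?E) = card ?L + card ?E"
    by (rule card_Un_disjoint) (use assms in auto)
  finally show ?thesis .
qed

lemma cross_connect_eq_graph:
  fixes A :: "'a::linorder set" and B :: "'b::linorder set"
  assumes "finite A" "finite B" "card A = card B"
  obtains g where "bij_betw g A B" "cross_connect A B = (\<lambda>x. (x, g x)) ` A"
proof
  let ?rA = "\<lambda>x. card {x'\<in>A. x' < x}" and ?rB = "\<lambda>y. card {y'\<in>B. y < y'}"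
  have "bij_betw ?rA A {0..<card A}"
    by (rule bij_betw_card_predecessors) (use assms in auto)
  then have rA: "bij_betw ?rA A {0..<card B}"
    using assms by simp
  have rB: "bij_betw ?rB B {0..<card B}"
    by (rule bij_betw_card_predecessors) (use assms in auto)
  let ?g = "the_inv_into B ?rB \<circ> ?rA"
  show "bij_betw ?g A B"
    using bij_betw_trans[OF rA bij_betw_the_inv_into[OF rB]] .
  have "y = ?g x \<longleftrightarrow> ?rA x = ?rB y" if "x \<in> A" "y \<in> B" for x y
  proof
    have "?rA x \<in> ?rB ` B"
      using bij_betw_apply[OF rA that(1)] bij_betw_imp_surj_on[OF rB] by simp
    then show "y = ?g x \<Longrightarrow> ?rA x = ?rB y"
      using f_the_inv_into_f[OF bij_betw_imp_inj_on[OF rB]] by simp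
    show "?rA x = ?rB y \<Longrightarrow> y = ?g x"
      using the_inv_into_f_eq[OF bij_betw_imp_inj_on[OF rB]] that by simp
  qed
  moreover have "?g x \<in> B" if "x \<in> A" for x
    using that \<open>bij_betw ?g A B\<close> bij_betwE by blast
  ultimately show "cross_connect A B = (\<lambda>x. (x, ?g x)) ` A"
    unfolding cross_connect_def by auto
qed

lemma phi_preserves_labels:
  assumes "(x, y) \<in> phi n r d a b"
  shows "a x = b y"
  using assms unfolding phi_def cross_connect_def smallest_def largest_def Let_def
  by (auto split: if_splits)

lemma smallest_card_self:
  assumes "finite A"
  shows "smallest (card A) A = A"
proof -
  have "card {x'\<in>A. x' < x} < card A" if "x \<in> A" for x
    by (rule psubset_card_mono) (use assms that in blast)+
  then show ?thesis
    unfolding smallest_def by blast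
qed

lemma phi_eq_Union_cross_connect:
  assumes "(a, b) \<in> Wp n r d"
  shows "phi n r d a b =
    (\<Union>k\<in>{1..d}. cross_connect {x\<in>Ubar n r. a x = k} {y\<in>Ubar n r. b y = k})"
proof -
  have card_eq: "card {x\<in>Ubar n r. a x = k} = card {y\<in>Ubar n r. b y = k}"
    if "k \<in> {1..d}" for k
    using assms that by (simp add: Wp_def)
  have finite_level: "finite {x\<in>Ubar n r. a x = k}" for k
    by (simp add: Ubar_def)
  have "smallest (card {y\<in>Ubar n r. b y = k}) {x\<in>Ubar n r. a x = k} = {x\<in>Ubar n r. a x = k}"
    if "k \<in> {1..d}" for k
    using smallest_card_self[OF finite_level, of k] card_eq[OF that] by simp
  then show ?thesis
    using card_eq unfolding phi_def Let_def by (intro SUP_cong) simp_all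
qed

type_synonym copy_pairs = "((nat \<times> nat) \<times> (nat \<times> nat)) set"

text \<open>An \<open>r\<close>-configuration as a relation; as in \<^const>\<open>phi\<close>, the copies of \<open>V\<close> are indexed by
  \<^term>\<open>Ubar n r\<close> as well.\<close>

locale configuration =
  fixes n r :: nat and F :: copy_pairs
  assumes subset_Ubar: "F \<subseteq> Ubar n r \<times> Ubar n r"
    and functional: "(x, y) \<in> F \<Longrightarrow> (x, y') \<in> F \<Longrightarrow> y = y'"
    and injective: "(x, y) \<in> F \<Longrightarrow> (x', y) \<in> F \<Longrightarrow> x = x'"
    and left_total: "x \<in> Ubar n r \<Longrightarrow> \<exists>y. (x, y) \<in> F"
    and right_total: "y \<in> Ubar n r \<Longrightarrow> \<exists>x. (x, y) \<in> F"

lemma phi_configuration: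
  assumes "(a, b) \<in> Wp n r d"
  shows "configuration n r (phi n r d a b)"
proof -
  define A where "A k = {x\<in>Ubar n r. a x = k}" for k
  define B where "B k = {y\<in>Ubar n r. b y = k}" for k
  have a_range: "a x \<in> {1..d}" if "x \<in> Ubar n r" for x
    using assms that by (simp add: Wp_def)
  have b_range: "b y \<in> {1..d}" if "y \<in> Ubar n r" for y
    using assms that by (simp add: Wp_def)
  have "\<exists>g. bij_betw g (A k) (B k) \<and> cross_connect (A k) (B k) = (\<lambda>x. (x, g x)) ` A k"
    if "k \<in> {1..d}" for k
  proof (rule cross_connect_eq_graph)
    show "finite (A k)" "finite (B k)"
      by (simp_all add: A_def B_def Ubar_def)
    show "card (A k) = card (B k)"
      using assms that by (simp add: A_def B_def Wp_def)
  qed blast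
  then obtain g where bij: "\<And>k. k \<in> {1..d} \<Longrightarrow> bij_betw (g k) (A k) (B k)"
    and graph: "\<And>k. k \<in> {1..d} \<Longrightarrow> cross_connect (A k) (B k) = (\<lambda>x. (x, g k x)) ` A k"
    by metis
  have "phi n r d a b = (\<Union>k\<in>{1..d}. (\<lambda>x. (x, g k x)) ` A k)"
    using phi_eq_Union_cross_connect[OF assms] graph by (simp add: A_def B_def)
  then have mem: "(x, y) \<in> phi n r d a b \<longleftrightarrow> x \<in> Ubar n r \<and> y = g (a x) x" for x y
    using a_range[of x] by (auto simp: A_def intro!: bexI[of _ "a x"])
  have g_level: "g k x \<in> B k" if "k \<in> {1..d}" "x \<in> A k" for k x
    using bij[OF that(1)] that(2) by (rule bij_betw_apply)
  show ?thesis
  proof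
    show "phi n r d a b \<subseteq> Ubar n r \<times> Ubar n r"
      using mem g_level a_range by (fastforce simp: A_def B_def)
  next
    fix x y y'
    assume "(x, y) \<in> phi n r d a b" "(x, y') \<in> phi n r d a b"
    then show "y = y'"
      by (simp add: mem)
  next
    fix x x' y
    assume xy: "(x, y) \<in> phi n r d a b" and x'y: "(x', y) \<in> phi n r d a b"
    have "x \<in> A (b y)" "x' \<in> A (b y)"
      using xy x'y phi_preserves_labels[OF xy] phi_preserves_labels[OF x'y] by (simp_all add: mem A_def)
    moreover have "g (b y) x = g (b y) x'"
      using xy x'y phi_preserves_labels[OF xy] phi_preserves_labels[OF x'y] by (simp add: mem)
    moreover have "b y \<in> {1..d}"
      using xy x'y mem phi_preserves_labels[OF xy] a_range by metis
    ultimately show "x = x'"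
      using bij by (meson bij_betw_imp_inj_on inj_onD)
  next
    fix x
    assume "x \<in> Ubar n r"
    then show "\<exists>y. (x, y) \<in> phi n r d a b"
      by (simp add: mem)
  next
    fix y
    assume "y \<in> Ubar n r"
    then have "y \<in> g (b y) ` A (b y)"
      using bij[OF b_range] by (simp add: B_def bij_betw_def)
    then obtain x where "x \<in> Ubar n r" "a x = b y" "y = g (a x) x"
      by (auto simp: A_def)
    then show "\<exists>x. (x, y) \<in> phi n r d a b"
      using mem by blast
  qed
qed

section \<open>The multigraph underlying a configuration\<close>

definition pairs_over :: "copy_pairs \<Rightarrow> nat \<Rightarrow> nat \<Rightarrow> copy_pairs" where
  "pairs_over F u v = {q\<in>F. fst (fst q) = u \<and> fst (snd q) = v}"

definition multigraph_of :: "copy_pairs \<Rightarrow> nat \<Rightarrow> nat \<Rightarrow> nat" where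
  "multigraph_of F u v = card (pairs_over F u v)"

lemma card_pairs_over_converse:
  "card {q\<in>pairs_over (F\<inverse>) v u. P q} = card {q\<in>pairs_over F u v. P (prod.swap q)}"
proof -
  have "{q\<in>pairs_over (F\<inverse>) v u. P q} = prod.swap ` {q\<in>pairs_over F u v. P (prod.swap q)}"
    by (auto simp: pairs_over_def image_iff)
  then show ?thesis
    by (simp add: card_image)
qed

lemma multigraph_of_converse: "multigraph_of (F\<inverse>) v u = multigraph_of F u v"
  using card_pairs_over_converse[where P = "\<lambda>_. True"] by (simp add: multigraph_of_def)

lemma sum_multigraph_of:
  assumes "finite F" "finite J"
  shows "(\<Sum>v\<in>J. multigraph_of F u v) = card {q\<in>F. fst (fst q) = u \<and> fst (snd q) \<in> J}"
  using card_eq_sum_card_fibres[of "{q\<in>F. fst (fst q) = u}" J "\<lambda>q. fst (snd q)"] assms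
  by (simp add: multigraph_of_def pairs_over_def)

context configuration
begin

lemma finite_F: "finite F"
  using subset_Ubar by (rule finite_subset) (simp add: Ubar_def)

lemma configuration_converse: "configuration n r (F\<inverse>)"
  using subset_Ubar functional injective left_total right_total
  by unfold_locales auto

lemma card_left_ends:
  assumes "X \<subseteq> Ubar n r"
  shows "card {q\<in>F. fst q \<in> X} = card X"
proof -
  have "bij_betw fst {q\<in>F. fst q \<in> X} X"
    unfolding bij_betw_def inj_on_def using assms functional left_total by force
  then show ?thesis
    by (rule bij_betw_same_card)
qed

lemma row_sum_multigraph_of:
  assumes "u < n"
  shows "(\<Sum>v<n. multigraph_of F u v) = r"
proof -
  have "{q\<in>F. fst (fst q) = u \<and> fst (snd q) \<in> {..<n}} = {q\<in>F. fst q \<in> {u} \<times> {1..r}}"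
    using subset_Ubar by (auto simp: Ubar_def)
  moreover have "{u} \<times> {1..r} \<subseteq> Ubar n r"
    using assms by (auto simp: Ubar_def)
  ultimately show ?thesis
    using sum_multigraph_of[OF finite_F] card_left_ends by simp
qed

lemma regular_multigraph_of: "regular n r (multigraph_of F)"
proof -
  interpret converse: configuration n r "F\<inverse>"
    by (rule configuration_converse)
  show ?thesis
    using row_sum_multigraph_of converse.row_sum_multigraph_of
    by (simp add: regular_def multigraph_of_converse)
qed

lemma is_multigraph_multigraph_of: "is_multigraph n (multigraph_of F)"
  using subset_Ubar
  by (fastforce simp: is_multigraph_def multigraph_of_def pairs_over_def Ubar_def card_eq_0_iff)

lemma bij_betw_rank_pairs_over:
  "bij_betw (\<lambda>q. card {q'\<in>pairs_over F u v. fst q' < fst q}) (pairs_over F u v)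
    {0..<multigraph_of F u v}"
  unfolding multigraph_of_def
proof (rule bij_betw_card_predecessors)
  show "finite (pairs_over F u v)"
    using finite_F by (simp add: pairs_over_def)
  show "fst q < fst q' \<or> fst q' < fst q"
    if "q \<in> pairs_over F u v" "q' \<in> pairs_over F u v" "q \<noteq> q'" for q q'
  proof -
    obtain x y x' y' where q: "q = (x, y)" and q': "q' = (x', y')"
      by (cases q, cases q')
    with that have "(x, y) \<in> F" "(x', y') \<in> F"
      by (simp_all add: pairs_over_def)
    then have "x \<noteq> x'"
      using that(3) functional q q' by blast
    with q q' show ?thesis
      by (simp add: neq_iff)
  qed
qed auto

end

section \<open>Noncrossing chains and planar matchings\<close>

lemma noncrossing_top:
  fixes M :: "('a::linorder \<times> 'b::order) set"
  assumes "finite M" "M \<noteq> {}" "pairwise noncross M"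
  obtains e0 where "e0 \<in> M" "\<And>e. e \<in> M \<Longrightarrow> e \<noteq> e0 \<Longrightarrow> fst e < fst e0 \<and> snd e < snd e0"
proof -
  obtain e0 where e0: "e0 \<in> M" "\<And>e. e \<in> M \<Longrightarrow> fst e \<le> fst e0"
    using Max_in[of "fst ` M"] Max_ge[of "fst ` M"] assms(1,2) by fastforce
  have "fst e < fst e0 \<and> snd e < snd e0" if "e \<in> M" "e \<noteq> e0" for e
  proof -
    have "noncross e e0"
      using assms(3) that e0(1) by (simp add: pairwise_def)
    then show ?thesis
      using e0(2)[OF that(1)] by (auto simp: noncross_def)
  qed
  with e0(1) show ?thesis
    using that by blast
qed

lemma less_copies_if_less_vertices:
  fixes q q' :: "('a::order \<times> 'b::ord) \<times> ('c::order \<times> 'd::ord)"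
  assumes "fst (fst q) < fst (fst q')" "fst (snd q) < fst (snd q')"
  shows "fst q < fst q' \<and> snd q < snd q'"
  using assms by (simp add: less_prod_def)

lemma pairwise_noncross_lift:
  fixes f :: "'a \<times> 'c \<Rightarrow> ('a::order \<times> 'b::ord) \<times> ('c::order \<times> 'd::ord)"
  assumes "pairwise noncross M"
    and "\<And>e. e \<in> M \<Longrightarrow> fst (fst (f e)) = fst e \<and> fst (snd (f e)) = snd e"
  shows "pairwise noncross (f ` M)"
proof (rule pairwiseI)
  fix q q'
  assume "q \<in> f ` M" "q' \<in> f ` M" "q \<noteq> q'"
  then obtain e e' where "e \<in> M" "e' \<in> M" "e \<noteq> e'" "q = f e" "q' = f e'"
    by blast
  moreover from this have "noncross e e'"
    using assms(1) by (simp add: pairwise_def)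
  ultimately show "noncross q q'"
    using assms(2) less_copies_if_less_vertices[of q q'] less_copies_if_less_vertices[of q' q]
    unfolding noncross_def by auto
qed

definition chains_ending_at :: "copy_pairs \<Rightarrow> nat \<times> nat \<Rightarrow> nat \<times> nat \<Rightarrow> copy_pairs set" where
  "chains_ending_at F x y =
     {S. S \<subseteq> F \<and> (x, y) \<in> S \<and> pairwise noncross S \<and> (\<forall>(p, q)\<in>S. p \<le> x \<and> q \<le> y)}"

context configuration
begin

lemma Phi_a_eq_Max_chains:
  assumes "(x, y) \<in> F"
  shows "Phi_a F x = Max (card ` chains_ending_at F x y)"
  unfolding Phi_a_def chains_ending_at_def
  by (rule arg_cong[where f = Max]) (use assms functional in blast)

lemma finite_chains_ending_at: "finite (chains_ending_at F x y)"
  by (rule finite_subset[of _ "Pow F"]) (auto simp: chains_ending_at_def finite_F)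

lemma card_chain_le_Phi_a:
  assumes "(x, y) \<in> F" "S \<in> chains_ending_at F x y"
  shows "card S \<le> Phi_a F x"
  using assms finite_chains_ending_at by (simp add: Phi_a_eq_Max_chains)

lemma Phi_a_strict_mono:
  assumes "(x, y) \<in> F" "(x', y') \<in> F" "x < x'" "y < y'"
  shows "Phi_a F x < Phi_a F x'"
proof -
  have "{(x, y)} \<in> chains_ending_at F x y"
    using assms(1) by (simp add: chains_ending_at_def)
  then obtain S where S: "S \<in> chains_ending_at F x y" "card S = Phi_a F x"
    using Max_in[of "card ` chains_ending_at F x y"] finite_chains_ending_at assms(1)
    by (fastforce simp: Phi_a_eq_Max_chains)
  then have "finite S" "(x', y') \<notin> S"
    using finite_F assms(3) by (auto simp: chains_ending_at_def finite_subset)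
  moreover have "insert (x', y') S \<in> chains_ending_at F x' y'"
    using S(1) assms by (fastforce simp: chains_ending_at_def pairwise_insert noncross_def)
  ultimately show ?thesis
    using card_chain_le_Phi_a[OF assms(2)] S(2) by fastforce
qed

lemma planar_matching_le_Phi_a:
  assumes M: "planar_matching n (multigraph_of F) M" and "M \<noteq> {}"
  shows "\<exists>x\<in>Ubar n r. card M \<le> Phi_a F x"
proof -
  have M_sub: "M \<subseteq> {(i, j). i < n \<and> j < n \<and> multigraph_of F i j > 0}"
    and M_noncross: "pairwise noncross M"
    using M by (auto simp: planar_matching_def)
  have "finite M"
    by (rule finite_subset[OF M_sub], rule finite_subset[of _ "{..<n} \<times> {..<n}"]) auto
  then obtain e0 where e0: "e0 \<in> M"
    and below: "\<And>e. e \<in> M \<Longrightarrow> e \<noteq> e0 \<Longrightarrow> fst e < fst e0 \<and> snd e < snd e0"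
    using \<open>M \<noteq> {}\<close> M_noncross by (rule noncrossing_top) blast
  have "\<forall>e\<in>M. \<exists>q. q \<in> pairs_over F (fst e) (snd e)"
    using M_sub by (fastforce simp: multigraph_of_def card_gt_0_iff)
  then obtain f where "\<And>e. e \<in> M \<Longrightarrow> f e \<in> pairs_over F (fst e) (snd e)"
    by metis
  then have f_F: "\<And>e. e \<in> M \<Longrightarrow> f e \<in> F"
    and f_vertices: "\<And>e. e \<in> M \<Longrightarrow> fst (fst (f e)) = fst e \<and> fst (snd (f e)) = snd e"
    by (auto simp: pairs_over_def)
  have "inj_on f M"
  proof (rule inj_onI)
    fix e e'
    assume "e \<in> M" "e' \<in> M" "f e = f e'"
    then show "e = e'"
      using f_vertices[of e] f_vertices[of e'] by (simp add: prod_eq_iff)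
  qed
  have "fst (f e) \<le> fst (f e0) \<and> snd (f e) \<le> snd (f e0)" if "e \<in> M" for e
  proof (cases "e = e0")
    case False
    then show ?thesis
      using below[OF that False] f_vertices[OF that] f_vertices[OF e0]
        less_copies_if_less_vertices[of "f e" "f e0"]
      by (simp add: less_imp_le)
  qed simp
  then have "f ` M \<in> chains_ending_at F (fst (f e0)) (snd (f e0))"
    using f_F e0 pairwise_noncross_lift[OF M_noncross f_vertices]
    by (fastforce simp: chains_ending_at_def)
  then have "card (f ` M) \<le> Phi_a F (fst (f e0))"
    using card_chain_le_Phi_a[of "fst (f e0)" "snd (f e0)" "f ` M"] f_F[OF e0] by simp
  moreover have "fst (f e0) \<in> Ubar n r"
    using subset_Ubar f_F[OF e0] by auto
  ultimately show ?thesis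
    using card_image[OF \<open>inj_on f M\<close>] by auto
qed

lemma Lmax_multigraph_of_le:
  assumes "\<And>x. x \<in> Ubar n r \<Longrightarrow> Phi_a F x \<le> d"
  shows "Lmax n (multigraph_of F) \<le> d"
  unfolding Lmax_def
proof (rule Max.boundedI)
  have "{card M |M. planar_matching n (multigraph_of F) M} \<subseteq> card ` Pow ({..<n} \<times> {..<n})"
    by (auto simp: planar_matching_def)
  then show "finite {card M |M. planar_matching n (multigraph_of F) M}"
    by (rule finite_subset) simp
  have "planar_matching n (multigraph_of F) {}"
    by (simp add: planar_matching_def)
  then show "{card M |M. planar_matching n (multigraph_of F) M} \<noteq> {}"
    by blast
next
  fix z
  assume "z \<in> {card M |M. planar_matching n (multigraph_of F) M}"
  then obtain M where "z = card M" "planar_matching n (multigraph_of F) M"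
    by blast
  then show "z \<le> d"
    using planar_matching_le_Phi_a[of M] assms by (cases "M = {}") force+
qed

end

section \<open>Configurations reversing the copies of each vertex\<close>

text \<open>The configurations \<^term>\<open>conf_of n G\<close> match the copies of every vertex in reverse
  order; conversely, such a configuration is the one associated with its underlying multigraph.\<close>

locale reversing_configuration = configuration +
  assumes reverses_copies: "(x, y) \<in> F \<Longrightarrow> (x', y') \<in> F \<Longrightarrow> fst x = fst x' \<or> fst y = fst y' \<Longrightarrow>
    x < x' \<longleftrightarrow> y' < y"

context reversing_configuration
begin

lemma reversing_configuration_converse: "reversing_configuration n r (F\<inverse>)"
proof -
  interpret converse: configuration n r "F\<inverse>"
    by (rule configuration_converse)
  show ?thesis
  proof
    fix x y x' y'
    assume "(x, y) \<in> F\<inverse>" "(x', y') \<in> F\<inverse>" "fst x = fst x' \<or> fst y = fst y'"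
    then show "x < x' \<longleftrightarrow> y' < y"
      using reverses_copies[of y' x' y x] by auto
  qed
qed

lemma copy_index_left:
  assumes p: "((u, \<sigma>), (v, \<tau>)) \<in> F"
  shows "\<sigma> = (\<Sum>v'\<in>{v<..<n}. multigraph_of F u v')
    + card {q\<in>pairs_over F u v. fst q < (u, \<sigma>)} + 1"
proof -
  let ?below = "{q\<in>F. fst q \<in> {u} \<times> {1..<\<sigma>}}"
    and ?later = "{q\<in>F. fst (fst q) = u \<and> fst (snd q) \<in> {v<..<n}}"
    and ?same = "{q\<in>pairs_over F u v. fst q < (u, \<sigma>)}"
  have "u < n" "1 \<le> \<sigma>" "\<sigma> \<le> r"
    using p subset_Ubar by (auto simp: Ubar_def)
  \<comment> \<open>By reversal, the copies of \<open>u\<close> below \<open>\<sigma>\<close> are matched to copies above \<open>(v, \<tau>)\<close>: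
    copies of vertices after \<open>v\<close>, or later copies of \<open>v\<close>.\<close>
  have "?below = ?later \<union> ?same"
  proof (rule set_eqI)
    fix q :: "(nat \<times> nat) \<times> (nat \<times> nat)"
    obtain u' s v' t where q: "q = ((u', s), (v', t))"
      by (metis prod.collapse)
    show "q \<in> ?below \<longleftrightarrow> q \<in> ?later \<union> ?same"
    proof (cases "q \<in> F \<and> u' = u")
      case True
      then have "s < \<sigma> \<longleftrightarrow> (v, \<tau>) < (v', t)"
        using reverses_copies[of "(u, s)" "(v', t)" "(u, \<sigma>)" "(v, \<tau>)"] p q by auto
      moreover have "1 \<le> s" "v' < n"
        using True subset_Ubar q by (auto simp: Ubar_def)
      ultimately show ?thesis
        using True q by (auto simp: pairs_over_def)
    next
      case False
      then show ?thesis
        using q by (auto simp: pairs_over_def)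
    qed
  qed
  moreover have "{u} \<times> {1..<\<sigma>} \<subseteq> Ubar n r"
    using \<open>u < n\<close> \<open>\<sigma> \<le> r\<close> by (auto simp: Ubar_def)
  then have "card ?below = \<sigma> - 1"
    by (simp add: card_left_ends card_cartesian_product)
  moreover have "card (?later \<union> ?same) = card ?later + card ?same"
    using finite_F by (intro card_Un_disjoint) (auto simp: pairs_over_def)
  ultimately show ?thesis
    using \<open>1 \<le> \<sigma>\<close> sum_multigraph_of[OF finite_F, of "{v<..<n}" u] by simp
qed

lemma copy_index_right:
  assumes "((u, \<sigma>), (v, \<tau>)) \<in> F"
  shows "\<tau> = (\<Sum>u'\<in>{u<..<n}. multigraph_of F u' v)
    + card {q\<in>pairs_over F u v. snd q < (v, \<tau>)} + 1"
proof -
  interpret converse: reversing_configuration n r "F\<inverse>"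
    by (rule reversing_configuration_converse)
  show ?thesis
    using converse.copy_index_left[of v \<tau> u \<sigma>] assms
    by (simp add: multigraph_of_converse card_pairs_over_converse)
qed

lemma multigraph_of_split:
  assumes p: "((u, \<sigma>), (v, \<tau>)) \<in> F"
  shows "multigraph_of F u v =
    card {q\<in>pairs_over F u v. fst q < (u, \<sigma>)} + card {q\<in>pairs_over F u v. snd q < (v, \<tau>)} + 1"
proof -
  let ?P = "pairs_over F u v"
  have "finite ?P"
    using finite_F by (simp add: pairs_over_def)
  have "{q\<in>?P. fst q = (u, \<sigma>)} = {((u, \<sigma>), (v, \<tau>))}"
  proof (intro equalityI subsetI)
    fix q
    assume q: "q \<in> {q\<in>?P. fst q = (u, \<sigma>)}"
    obtain x y where xy: "q = (x, y)"
      by (cases q)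
    with q have "((u, \<sigma>), y) \<in> F"
      by (auto simp: pairs_over_def)
    then have "y = (v, \<tau>)"
      using functional[OF p] by simp
    with xy q show "q \<in> {((u, \<sigma>), (v, \<tau>))}"
      by simp
  qed (use p in \<open>simp add: pairs_over_def\<close>)
  moreover have "{q\<in>?P. (u, \<sigma>) < fst q} = {q\<in>?P. snd q < (v, \<tau>)}"
  proof (rule Collect_cong)
    fix q
    show "q \<in> ?P \<and> (u, \<sigma>) < fst q \<longleftrightarrow> q \<in> ?P \<and> snd q < (v, \<tau>)"
      using reverses_copies[OF p, of "fst q" "snd q"] by (auto simp: pairs_over_def)
  qed
  moreover have "card ?P = card {q\<in>?P. fst q < (u, \<sigma>)} + card {q\<in>?P. fst q = (u, \<sigma>)}
      + card {q\<in>?P. (u, \<sigma>) < fst q}"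
    using \<open>finite ?P\<close> by (rule card_split_less_eq_greater)
  ultimately show ?thesis
    by (simp add: multigraph_of_def)
qed

lemma conf_of_multigraph_of_subset: "conf_of n (multigraph_of F) \<subseteq> F"
proof
  fix p
  assume "p \<in> conf_of n (multigraph_of F)"
  then obtain u v s where p: "p = ((u, (\<Sum>v'\<in>{v<..<n}. multigraph_of F u v') + s),
      (v, (\<Sum>u'\<in>{u<..<n}. multigraph_of F u' v) + multigraph_of F u v - s + 1))"
    and s: "1 \<le> s" "s \<le> multigraph_of F u v"
    unfolding conf_of_def by blast
  let ?P = "pairs_over F u v"
  have "s - 1 \<in> (\<lambda>q. card {q'\<in>?P. fst q' < fst q}) ` ?P"
    using bij_betw_imp_surj_on[OF bij_betw_rank_pairs_over] s by simp
  then obtain q where "q \<in> ?P" and rank: "card {q'\<in>?P. fst q' < fst q} = s - 1"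
    by (metis (no_types, lifting) imageE)
  then obtain \<sigma> \<tau> where q: "((u, \<sigma>), (v, \<tau>)) \<in> F" and q_eq: "q = ((u, \<sigma>), (v, \<tau>))"
    by (cases q) (auto simp: pairs_over_def)
  have "\<sigma> = (\<Sum>v'\<in>{v<..<n}. multigraph_of F u v') + s"
    using copy_index_left[OF q] rank s(1) by (simp add: q_eq)
  moreover have "\<tau> = (\<Sum>u'\<in>{u<..<n}. multigraph_of F u' v) + multigraph_of F u v - s + 1"
    using copy_index_right[OF q] multigraph_of_split[OF q] rank s(1) by (simp add: q_eq)
  ultimately show "p \<in> F"
    using p q by simp
qed

lemma subset_conf_of_multigraph_of: "F \<subseteq> conf_of n (multigraph_of F)"
proof
  fix p
  assume "p \<in> F"
  then obtain u \<sigma> v \<tau> where p_eq: "p = ((u, \<sigma>), (v, \<tau>))" and p: "((u, \<sigma>), (v, \<tau>)) \<in> F"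
    by (metis prod.collapse)
  define h where "h = card {q\<in>pairs_over F u v. fst q < (u, \<sigma>)}"
  have "u < n" "v < n"
    using p subset_Ubar by (auto simp: Ubar_def)
  moreover have "h + 1 \<le> multigraph_of F u v"
    using multigraph_of_split[OF p] by (simp add: h_def)
  moreover have "\<sigma> = (\<Sum>v'\<in>{v<..<n}. multigraph_of F u v') + (h + 1)"
    using copy_index_left[OF p] by (simp add: h_def)
  moreover have "\<tau> = (\<Sum>u'\<in>{u<..<n}. multigraph_of F u' v) + multigraph_of F u v - (h + 1) + 1"
    using copy_index_right[OF p] multigraph_of_split[OF p] by (simp add: h_def)
  ultimately show "p \<in> conf_of n (multigraph_of F)"
    unfolding conf_of_def p_eq by (intro CollectI exI[of _ u] exI[of _ v] exI[of _ "h + 1"]) simp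
qed

lemma conf_of_multigraph_of: "conf_of n (multigraph_of F) = F"
  using conf_of_multigraph_of_subset subset_conf_of_multigraph_of by (rule subset_antisym)

end

section \<open>Labellings fixed by Phi_a\<close>

lemma antimono_on_copies:
  fixes f :: "nat \<times> nat \<Rightarrow> nat"
  assumes step: "\<And>i s. i < n \<Longrightarrow> 1 \<le> s \<Longrightarrow> s < r \<Longrightarrow> f (i, s + 1) \<le> f (i, s)"
    and "x \<in> Ubar n r" "x' \<in> Ubar n r" "fst x = fst x'" "x \<le> x'"
  shows "f x' \<le> f x"
proof -
  obtain i s s' where x: "x = (i, s)" and x': "x' = (i, s')"
    using assms(4) by (metis prod.collapse)
  have "i < n" "1 \<le> s" "s \<le> s'" "s' \<le> r"
    using assms(2,3,5) by (auto simp: x x' Ubar_def)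
  then show ?thesis
    using lift_Suc_antimono_le_ivl[of "{1..<r}" "\<lambda>s. f (i, s)" s s'] step
    by (auto simp: x x')
qed

locale labelled_configuration = configuration +
  fixes a b :: "nat \<times> nat \<Rightarrow> nat"
  assumes Phi_a_eq: "x \<in> Ubar n r \<Longrightarrow> Phi_a F x = a x"
    and labels_agree: "(x, y) \<in> F \<Longrightarrow> a x = b y"
    and a_step: "i < n \<Longrightarrow> 1 \<le> s \<Longrightarrow> s < r \<Longrightarrow> a (i, s + 1) \<le> a (i, s)"
    and b_step: "j < n \<Longrightarrow> 1 \<le> t \<Longrightarrow> t < r \<Longrightarrow> b (j, t + 1) \<le> b (j, t)"

lemma (in labelled_configuration) not_noncross_at_common_vertex:
  assumes xy: "(x, y) \<in> F" and x'y': "(x', y') \<in> F" and common: "fst x = fst x' \<or> fst y = fst y'"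
  shows "\<not> (x < x' \<and> y < y')"
proof
  assume less: "x < x' \<and> y < y'"
  have in_Ubar: "x \<in> Ubar n r" "x' \<in> Ubar n r" "y \<in> Ubar n r" "y' \<in> Ubar n r"
    using xy x'y' subset_Ubar by auto
  have "a x < a x'"
    using Phi_a_strict_mono[OF xy x'y'] less in_Ubar Phi_a_eq by simp
  moreover have "a x' \<le> a x" if "fst x = fst x'"
    using antimono_on_copies[where f = a and x = x and x' = x', OF a_step] in_Ubar that less
    by (simp add: less_imp_le)
  moreover have "b y' \<le> b y" if "fst y = fst y'"
    using antimono_on_copies[where f = b and x = y and x' = y', OF b_step] in_Ubar that less
    by (simp add: less_imp_le)
  ultimately show False
    using common labels_agree[OF xy] labels_agree[OF x'y'] by linarith
qed

sublocale labelled_configuration \<subseteq> reversing_configuration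
proof
  fix x y x' y'
  assume xy: "(x, y) \<in> F" and x'y': "(x', y') \<in> F" and common: "fst x = fst x' \<or> fst y = fst y'"
  show "x < x' \<longleftrightarrow> y' < y"
  proof
    assume "x < x'"
    moreover have "y \<noteq> y'"
      using injective xy x'y' \<open>x < x'\<close> by blast
    ultimately show "y' < y"
      using not_noncross_at_common_vertex[OF xy x'y' common] by auto
  next
    assume "y' < y"
    moreover have "x \<noteq> x'"
      using functional xy x'y' \<open>y' < y\<close> by blast
    ultimately show "x < x'"
      using not_noncross_at_common_vertex[OF x'y' xy] common by auto
  qed
qed

theorem lemma9:
  fixes n r d :: nat and a b :: "nat \<times> nat \<Rightarrow> nat"
  assumes "1 \<le> n" and "1 \<le> r" and "1 \<le> d"
    and "(a, b) \<in> Wp n r d"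
    and "\<forall>x\<in>Ubar n r. Phi_a (phi n r d a b) x = a x"
    and "\<forall>y\<in>Ubar n r. Phi_b (phi n r d a b) y = b y"
  shows "phi n r d a b \<in> Gbar_set n r d"
proof -
  let ?F = "phi n r d a b"
  have a_range: "\<forall>x\<in>Ubar n r. a x \<in> {1..d}"
    using assms(4) by (simp add: Wp_def)
  interpret labelled_configuration n r ?F a b
  proof (rule labelled_configuration.intro)
    show "configuration n r ?F"
      using assms(4) by (rule phi_configuration)
    show "labelled_configuration_axioms n r ?F a b"
      using assms(4,5) phi_preserves_labels by unfold_locales (auto simp: Wp_def)
  qed
  have "Lmax n (multigraph_of ?F) \<le> d"
    using Phi_a_eq a_range by (intro Lmax_multigraph_of_le) auto
  then have "multigraph_of ?F \<in> Gr n r d"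
    by (simp add: Gr_def regular_multigraph_of is_multigraph_multigraph_of)
  then show ?thesis
    unfolding Gbar_set_def using conf_of_multigraph_of by (metis image_eqI)
qed

end
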